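(* Let $G$ be a unimodular locally compact group with Haar measure $m$, and let $\nu$ be a Delone measure on $G$. Let $B_l,B_u\subseteq G$ be compact symmetric unit neighborhoods and $C_l,C_u$ positive finite constants with $C_l\le \nu(B_lx)$ and $\nu(B_u^2x)\le C_u$ for all $x\in G$. Then \[ \frac{C_l}{m(B_l^{2})}\cdot I(G)\le \mathrm{L}_\nu^-\le \frac{C_u}{m(B_u)}\cdot I(G), \qquad \frac{C_l}{m(B_l^{2})}\cdot I(G)^{-1} \le \mathrm{L}_\nu^+\le \frac{C_u}{m(B_u)} \cdot I(G)^{-1}. \]
   Context: A measure is a positive Borel measure. $\nu$ is upper translation bounded if $\sup_{x\in G}\nu(B_ux)<\infty$ for some compact symmetric unit neighborhood $B_u$, lower translation bounded if $\inf_{x\in G}\nu(B_lx)>0$ for some compact symmetric unit neighborhood $B_l$, and a Delone measure if both. $\mathcal K$: nonempty compact subsets of $G$; $\mathcal K_p$: those of positive Haar measure. $I(G)=\sup_{K\in \mathcal K}\inf_{A\in \mathcal K_p} m(KA)/m(A)\in[1,\infty]$, with $1/\infty=0$. $\mathrm{L}_\nu^-=\sup_{K\in \mathcal K}\inf_{A\in \mathcal K_p} \nu(KA)/m(A)$, $\mathrm{L}_\nu^+=\inf_{K\in \mathcal K}\sup_{A\in \mathcal K_p} \nu(A)/m(KA)$. $B^2=BB$. *)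

theory Defs
  imports "HOL-Analysis.Analysis"
begin

text \<open>The (possibly non-abelian) group G is written additively via the type class
  topological_group_add (group_add is not required to be commutative).
  Products AB become setprod A B, right translates Bx become rtrans B x.\<close>

definition setprod :: "'g::group_add set \<Rightarrow> 'g set \<Rightarrow> 'g set" where
  "setprod A B = {a + b | a b. a \<in> A \<and> b \<in> B}"

definition rtrans :: "'g::group_add set \<Rightarrow> 'g \<Rightarrow> 'g set" where
  "rtrans B x = (\<lambda>b. b + x) ` B"

definition ltrans :: "'g::group_add \<Rightarrow> 'g set \<Rightarrow> 'g set" where
  "ltrans x B = (\<lambda>b. x + b) ` B"

definition csu_nbhd :: "'g::topological_group_add set \<Rightarrow> bool" where
  "csu_nbhd B \<longleftrightarrow> compact B \<and> uminus ` B = B \<and> 0 \<in> interior B"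

definition borel_measure_on :: "'g::topological_space measure \<Rightarrow> bool" where
  "borel_measure_on \<mu> \<longleftrightarrow> sets \<mu> = sets borel"

definition radon_measure :: "'g::topological_space measure \<Rightarrow> bool" where
  "radon_measure \<mu> \<longleftrightarrow> borel_measure_on \<mu> \<and>
     (\<forall>K. compact K \<longrightarrow> emeasure \<mu> K < \<infinity>) \<and>
     (\<forall>A \<in> sets borel. emeasure \<mu> A = (INF U \<in> {U. open U \<and> A \<subseteq> U}. emeasure \<mu> U)) \<and>
     (\<forall>U. open U \<longrightarrow> emeasure \<mu> U = (SUP K \<in> {K. compact K \<and> K \<subseteq> U}. emeasure \<mu> K))"

definition haar_measure :: "'g::topological_group_add measure \<Rightarrow> bool" where
  "haar_measure m \<longleftrightarrow> radon_measure m \<and>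
     (\<forall>x. \<forall>A \<in> sets borel. emeasure m (ltrans x A) = emeasure m A) \<and>
     (\<exists>A \<in> sets borel. emeasure m A \<noteq> 0)"

definition unimodular_haar :: "'g::topological_group_add measure \<Rightarrow> bool" where
  "unimodular_haar m \<longleftrightarrow> haar_measure m \<and>
     (\<forall>x. \<forall>A \<in> sets borel. emeasure m (rtrans A x) = emeasure m A)"

definition upper_translation_bounded :: "'g::topological_group_add measure \<Rightarrow> bool" where
  "upper_translation_bounded \<nu> \<longleftrightarrow>
     (\<exists>B. csu_nbhd B \<and> (SUP x. emeasure \<nu> (rtrans B x)) < \<infinity>)"

definition lower_translation_bounded :: "'g::topological_group_add measure \<Rightarrow> bool" where
  "lower_translation_bounded \<nu> \<longleftrightarrow>
     (\<exists>B. csu_nbhd B \<and> (INF x. emeasure \<nu> (rtrans B x)) > 0)"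

definition delone_measure :: "'g::topological_group_add measure \<Rightarrow> bool" where
  "delone_measure \<nu> \<longleftrightarrow> borel_measure_on \<nu> \<and>
     upper_translation_bounded \<nu> \<and> lower_translation_bounded \<nu>"

definition cpt_sets :: "'g::topological_space set set" where
  "cpt_sets = {K. compact K \<and> K \<noteq> {}}"

definition cpt_pos_sets :: "'g::topological_space measure \<Rightarrow> 'g set set" where
  "cpt_pos_sets m = {A. compact A \<and> A \<noteq> {} \<and> emeasure m A > 0}"

text \<open>ennreal arithmetic: x / 0 = \<infinity> for x > 0, 1 / \<infinity> = 0\<close>
definition I_G :: "'g::topological_group_add measure \<Rightarrow> ennreal" where
  "I_G m = (SUP K \<in> cpt_sets. INF A \<in> cpt_pos_sets m. emeasure m (setprod K A) / emeasure m A)"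

definition L_minus :: "'g::topological_group_add measure \<Rightarrow> 'g measure \<Rightarrow> ennreal" where
  "L_minus m \<nu> = (SUP K \<in> cpt_sets. INF A \<in> cpt_pos_sets m. emeasure \<nu> (setprod K A) / emeasure m A)"

definition L_plus :: "'g::topological_group_add measure \<Rightarrow> 'g measure \<Rightarrow> ennreal" where
  "L_plus m \<nu> = (INF K \<in> cpt_sets. SUP A \<in> cpt_pos_sets m. emeasure \<nu> A / emeasure m (setprod K A))"

end

theory Submission
  imports Defs
begin

text \<open>
  Let \<open>B\<close> be a compact symmetric unit neighbourhood and \<open>S\<close> compact. A maximal family
  \<open>F \<subseteq> S\<close> whose right translates \<open>B x\<close> are pairwise disjoint is finite, because these
  translates lie in \<open>B S\<close> and all have Haar measure \<open>m(B)\<close> by unimodularity; by maximality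
  and symmetry of \<open>B\<close>, the translates \<open>B\<^sup>2 x\<close> with \<open>x \<in> F\<close> cover \<open>S\<close>. Counting \<open>F\<close>
  against the bounds on \<open>\<nu>\<close> compares \<open>\<nu>\<close> with \<open>m\<close>:
  \<open>\<nu>(S) \<le> C\<^sub>u / m(B\<^sub>u) \<cdot> m(B\<^sub>u S)\<close> and \<open>C\<^sub>l / m(B\<^sub>l\<^sup>2) \<cdot> m(S) \<le> \<nu>(B\<^sub>l S)\<close>.

  Inserted into the definitions of \<open>L\<^sup>-\<close> and \<open>L\<^sup>+\<close>, these estimates turn the ratios of
  \<open>\<nu>\<close> into the ratios \<open>m(KA)/m(A)\<close> that define \<open>I(G)\<close>, with \<open>K\<close> replaced by \<open>B K\<close> or
  \<open>K B\<close>, or \<open>A\<close> by \<open>B A\<close>; these are again admissible compact sets, so the constants pass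
  through the suprema and infima. For \<open>L\<^sup>+\<close> the infimum over \<open>A\<close> inside \<open>I(G)\<close> is turned
  into a supremum by the order-reversing involution \<open>inverse\<close> on \<open>ennreal\<close>.
\<close>

lemma ennreal_inverse_antimono: "a \<le> b \<Longrightarrow> inverse b \<le> inverse (a::ennreal)"
  including ennreal.lifting by transfer (simp add: ereal_inverse_antimono)

lemma ennreal_inverse_inverse [simp]: "inverse (inverse a) = (a::ennreal)"
  using one_divide_one_divide_ennreal[of a] by (simp add: divide_ennreal_def)

lemma inverse_SUP_ennreal: "inverse (SUP i\<in>I. f i) = (INF i\<in>I. inverse (f i :: ennreal))"
proof (rule antisym)
  show "inverse (SUP i\<in>I. f i) \<le> (INF i\<in>I. inverse (f i))"
    by (intro INF_greatest ennreal_inverse_antimono SUP_upper)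
  have "(SUP i\<in>I. f i) \<le> inverse (INF i\<in>I. inverse (f i))"
  proof (rule SUP_least)
    fix i assume "i \<in> I"
    then have "inverse (inverse (f i)) \<le> inverse (INF i\<in>I. inverse (f i))"
      by (intro ennreal_inverse_antimono INF_lower)
    then show "f i \<le> inverse (INF i\<in>I. inverse (f i))"
      by simp
  qed
  then show "(INF i\<in>I. inverse (f i)) \<le> inverse (SUP i\<in>I. f i)"
    using ennreal_inverse_antimono by fastforce
qed

lemma inverse_INF_ennreal: "inverse (INF i\<in>I. f i) = (SUP i\<in>I. inverse (f i :: ennreal))"
proof -
  have "(INF i\<in>I. f i) = inverse (SUP i\<in>I. inverse (f i))"
    using inverse_SUP_ennreal[of "\<lambda>i. inverse (f i)" I] by simp
  then show ?thesis
    by simp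
qed

lemma inverse_divide_ennreal: "a < top \<Longrightarrow> b \<noteq> 0 \<Longrightarrow> inverse (a / b) = b / (a::ennreal)"
  unfolding divide_ennreal_def
  by (subst ennreal_inverse_mult') (auto simp: mult.commute top.not_eq_extremum[symmetric])

lemma INF_mult_left_ennreal:
  fixes c :: ennreal
  assumes "c \<noteq> 0" "c \<noteq> top"
  shows "c * (INF i\<in>I. f i) = (INF i\<in>I. c * f i)"
proof -
  have inverse_mult: "inverse (inverse c * x) = c * inverse x" for x
    using assms by (subst ennreal_inverse_mult') (auto simp: top.not_eq_extremum[symmetric])
  have "c * (INF i\<in>I. f i) = c * inverse (SUP i\<in>I. inverse (f i))"
    by (simp add: inverse_SUP_ennreal)
  also have "\<dots> = inverse (SUP i\<in>I. inverse c * inverse (f i))"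
    by (simp only: inverse_mult[symmetric] SUP_mult_left_ennreal)
  also have "\<dots> = (INF i\<in>I. c * f i)"
    by (simp only: inverse_SUP_ennreal inverse_mult ennreal_inverse_inverse)
  finally show ?thesis .
qed

lemma ennreal_divide_mult_cancel: "b \<noteq> 0 \<Longrightarrow> b \<noteq> top \<Longrightarrow> a / b * (x * b) = x * (a::ennreal)"
  by (metis ennreal_times_divide mult.commute mult_divide_eq_ennreal)

lemma setprod_eq_image: "setprod A B = (\<lambda>(a, b). a + b) ` (A \<times> B)"
  unfolding setprod_def by force

lemma compact_setprod:
  fixes A B :: "'g::topological_group_add set"
  assumes "compact A" "compact B"
  shows "compact (setprod A B)"
  unfolding setprod_eq_image case_prod_beta
  by (intro compact_continuous_image compact_Times assms continuous_intros)

lemma compact_rtrans: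
  fixes A :: "'g::topological_group_add set"
  assumes "compact A"
  shows "compact (rtrans A x)"
  unfolding rtrans_def by (intro compact_continuous_image assms continuous_intros)

lemma open_ltrans:
  fixes U :: "'g::topological_group_add set"
  assumes "open U"
  shows "open (ltrans x U)"
proof -
  have "ltrans x U = (\<lambda>y. -x + y) -` U"
    unfolding ltrans_def by (auto simp: image_iff) (metis add_minus_cancel)
  then show ?thesis
    using assms by (simp add: open_vimage continuous_on_add)
qed

lemma setprod_assoc: "setprod (setprod A B) C = setprod A (setprod B (C::'g::group_add set))"
  unfolding setprod_def by (auto simp: add.assoc) (metis add.assoc)+

lemma ltrans_subset_setprod: "k \<in> K \<Longrightarrow> ltrans k A \<subseteq> setprod K A"
  unfolding ltrans_def setprod_def by blast

lemma rtrans_subset_setprod: "x \<in> S \<Longrightarrow> rtrans B x \<subseteq> setprod B S"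
  unfolding rtrans_def setprod_def by blast

lemma rtrans_disjoint_if_not_in_rtrans_setprod:
  fixes B :: "'g::group_add set"
  assumes "uminus ` B = B" and "y \<notin> rtrans (setprod B B) x"
  shows "rtrans B y \<inter> rtrans B x = {}"
proof (rule ccontr)
  assume "rtrans B y \<inter> rtrans B x \<noteq> {}"
  then obtain b c where "b \<in> B" "c \<in> B" "b + y = c + x"
    unfolding rtrans_def by auto
  have "-b \<in> B"
    using assms(1) \<open>b \<in> B\<close> by blast
  moreover have "y = (-b + c) + x"
    using \<open>b + y = c + x\<close> by (metis add.assoc minus_add_cancel)
  ultimately have "y \<in> rtrans (setprod B B) x"
    unfolding rtrans_def setprod_def using \<open>c \<in> B\<close> by blast
  with assms(2) show False ..
qed

lemma zero_in_csu_nbhd: "csu_nbhd B \<Longrightarrow> 0 \<in> B"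
  unfolding csu_nbhd_def using interior_subset by blast

lemma csu_nbhd_in_cpt_sets: "csu_nbhd B \<Longrightarrow> B \<in> cpt_sets"
  unfolding cpt_sets_def csu_nbhd_def using interior_subset by blast

lemma setprod_in_cpt_sets:
  fixes K L :: "'g::topological_group_add set"
  shows "K \<in> cpt_sets \<Longrightarrow> L \<in> cpt_sets \<Longrightarrow> setprod K L \<in> cpt_sets"
  unfolding cpt_sets_def setprod_def by (auto simp: compact_setprod[unfolded setprod_def])

lemma cpt_setsD: "K \<in> cpt_sets \<Longrightarrow> compact K"
  by (simp add: cpt_sets_def)

lemma cpt_pos_setsD:
  assumes "A \<in> cpt_pos_sets m"
  shows "compact A" "emeasure m A \<noteq> 0"
  using assms by (auto simp: cpt_pos_sets_def)

lemma emeasure_le_sum_cover: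
  assumes "finite F" "S \<subseteq> (\<Union>x\<in>F. T x)" "\<And>x. T x \<in> sets M"
  shows "emeasure M S \<le> (\<Sum>x\<in>F. emeasure M (T x))"
proof -
  have "emeasure M S \<le> emeasure M (\<Union>x\<in>F. T x)"
    using assms by (intro emeasure_mono) auto
  also have "\<dots> \<le> (\<Sum>x\<in>F. emeasure M (T x))"
    using assms by (intro emeasure_subadditive_finite) auto
  finally show ?thesis .
qed

lemma haar_measureD:
  assumes "haar_measure m"
  shows haar_measure_sets: "sets m = sets borel"
    and emeasure_compact_less_top: "compact K \<Longrightarrow> emeasure m K < top"
    and emeasure_ltrans: "A \<in> sets borel \<Longrightarrow> emeasure m (ltrans x A) = emeasure m A"
    and haar_outer_regular:
      "A \<in> sets borel \<Longrightarrow> emeasure m A = (INF U \<in> {U. open U \<and> A \<subseteq> U}. emeasure m U)"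
    and haar_inner_regular:
      "open U \<Longrightarrow> emeasure m U = (SUP K \<in> {K. compact K \<and> K \<subseteq> U}. emeasure m K)"
    and haar_nontrivial: "\<exists>A \<in> sets borel. emeasure m A \<noteq> 0"
  using assms unfolding haar_measure_def radon_measure_def borel_measure_on_def infinity_ennreal_def
  by meson+

lemma unimodular_haarD:
  assumes "unimodular_haar m"
  shows unimodular_haar_measure: "haar_measure m"
    and emeasure_rtrans: "A \<in> sets borel \<Longrightarrow> emeasure m (rtrans A x) = emeasure m A"
  using assms unfolding unimodular_haar_def by auto

lemma emeasure_compact_eq_0_if_open_null:
  fixes m :: "'g::{topological_group_add, t2_space} measure"
  assumes m: "haar_measure m" and U: "open U" "u \<in> U" "emeasure m U = 0" and K: "compact K"
  shows "emeasure m K = 0"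
proof -
  have sets_ltrans: "ltrans x U \<in> sets m" for x
    using open_ltrans[OF U(1)] by (simp add: haar_measure_sets[OF m])
  have "K \<subseteq> (\<Union>x\<in>K. ltrans (x - u) U)"
    unfolding ltrans_def using U(2) by (force simp: diff_add_cancel)
  then obtain C where C: "finite C" "K \<subseteq> (\<Union>x\<in>C. ltrans (x - u) U)"
    using compactE_image[OF K, of K "\<lambda>x. ltrans (x - u) U"] open_ltrans[OF U(1)] by metis
  have "emeasure m K \<le> (\<Sum>x\<in>C. emeasure m (ltrans (x - u) U))"
    using C sets_ltrans by (rule emeasure_le_sum_cover)
  also have "\<dots> = 0"
    using emeasure_ltrans[OF m] U by simp
  finally show ?thesis
    by simp
qed

lemma emeasure_open_pos:
  fixes m :: "'g::{topological_group_add, t2_space} measure"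
  assumes m: "haar_measure m" and "open U" "U \<noteq> {}"
  shows "0 < emeasure m U"
proof (rule ccontr)
  assume "\<not> 0 < emeasure m U"
  with assms obtain u where "u \<in> U" "emeasure m U = 0"
    by auto
  then have compact_null: "emeasure m K = 0" if "compact K" for K
    using emeasure_compact_eq_0_if_open_null[OF m \<open>open U\<close>] that by blast
  have open_null: "emeasure m V = 0" if "open V" for V
    using haar_inner_regular[OF m that] compact_null by (simp add: SUP_constant bot_ennreal)
  obtain A where A: "A \<in> sets borel" "emeasure m A \<noteq> 0"
    using haar_nontrivial[OF m] by blast
  have "emeasure m A = (INF V \<in> {V. open V \<and> A \<subseteq> V}. emeasure m V)"
    by (rule haar_outer_regular[OF m A(1)])
  also have "\<dots> = 0"
    using open_null by (simp add: INF_constant) blast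
  finally show False
    using A(2) by simp
qed

lemma emeasure_csu_nbhd_pos:
  fixes m :: "'g::{topological_group_add, t2_space} measure"
  assumes m: "haar_measure m" and B: "csu_nbhd B"
  shows "0 < emeasure m B"
proof -
  have "0 < emeasure m (interior B)"
    using B by (intro emeasure_open_pos[OF m]) (auto simp: csu_nbhd_def)
  also have "\<dots> \<le> emeasure m B"
    using B interior_subset by (intro emeasure_mono)
      (auto simp: csu_nbhd_def haar_measure_sets[OF m] borel_compact)
  finally show ?thesis .
qed

lemma emeasure_le_setprod:
  fixes m :: "'g::{topological_group_add, t2_space} measure"
  assumes m: "haar_measure m" and "k \<in> K" "compact K" "compact A"
  shows "emeasure m A \<le> emeasure m (setprod K A)"
proof -
  have "emeasure m A = emeasure m (ltrans k A)"
    using emeasure_ltrans[OF m] assms(4) by (simp add: borel_compact)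
  also have "\<dots> \<le> emeasure m (setprod K A)"
    using assms ltrans_subset_setprod
    by (intro emeasure_mono) (auto simp: haar_measure_sets[OF m] borel_compact compact_setprod)
  finally show ?thesis .
qed

lemma setprod_in_cpt_pos_sets:
  fixes m :: "'g::{topological_group_add, t2_space} measure"
  assumes m: "haar_measure m" and K: "K \<in> cpt_sets" and A: "A \<in> cpt_pos_sets m"
  shows "setprod K A \<in> cpt_pos_sets m"
proof -
  obtain k where "k \<in> K" "compact K"
    using K unfolding cpt_sets_def by blast
  then have "emeasure m A \<le> emeasure m (setprod K A)"
    using A emeasure_le_setprod[OF m] unfolding cpt_pos_sets_def by blast
  then show ?thesis
    using K A setprod_in_cpt_sets[of K A] unfolding cpt_sets_def cpt_pos_sets_def by auto
qed

section \<open>Packing by disjoint translates\<close>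

lemma card_disjoint_rtrans_le:
  fixes m :: "'g::{topological_group_add, t2_space} measure"
  assumes m: "unimodular_haar m" and "compact B" "compact S"
    and F: "finite F" "F \<subseteq> S" "disjoint_family_on (rtrans B) F"
  shows "of_nat (card F) * emeasure m B \<le> emeasure m (setprod B S)"
proof -
  note sets_m = haar_measure_sets[OF unimodular_haar_measure[OF m]]
  have "of_nat (card F) * emeasure m B = (\<Sum>x\<in>F. emeasure m (rtrans B x))"
    using emeasure_rtrans[OF m] borel_compact[OF \<open>compact B\<close>] by simp
  also have "\<dots> = emeasure m (\<Union>x\<in>F. rtrans B x)"
    using F \<open>compact B\<close> by (intro sum_emeasure) (auto simp: sets_m borel_compact compact_rtrans)
  also have "\<dots> \<le> emeasure m (setprod B S)"
    using F assms(2,3)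
    by (intro emeasure_mono UN_least rtrans_subset_setprod) (auto simp: sets_m borel_compact compact_setprod)
  finally show ?thesis .
qed

lemma disjoint_rtrans_card_bounded:
  fixes m :: "'g::{topological_group_add, t2_space} measure" and B S :: "'g set"
  assumes m: "unimodular_haar m" and B: "csu_nbhd B" and S: "compact S"
  obtains N where
    "\<And>F. finite F \<Longrightarrow> F \<subseteq> S \<Longrightarrow> disjoint_family_on (rtrans B) F \<Longrightarrow> card F < N"
proof -
  note haar = unimodular_haar_measure[OF m]
  have "compact B"
    using B by (simp add: csu_nbhd_def)
  have mB: "emeasure m B \<noteq> 0" "emeasure m B \<noteq> top"
    using emeasure_csu_nbhd_pos[OF haar B] emeasure_compact_less_top[OF haar \<open>compact B\<close>] by auto
  have "emeasure m (setprod B S) / emeasure m B < top"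
    using emeasure_compact_less_top[OF haar compact_setprod[OF \<open>compact B\<close> S]] mB
    by (simp add: ennreal_divide_eq_top_iff top.not_eq_extremum[symmetric])
  then obtain N where N: "emeasure m (setprod B S) / emeasure m B < of_nat N"
    using ennreal_Ex_less_of_nat by blast
  have "card F < N" if "finite F" "F \<subseteq> S" "disjoint_family_on (rtrans B) F" for F
  proof -
    have "of_nat (card F) * emeasure m B / emeasure m B \<le> emeasure m (setprod B S) / emeasure m B"
      using card_disjoint_rtrans_le[OF m \<open>compact B\<close> S that] by (rule divide_right_mono_ennreal)
    then have "of_nat (card F) \<le> emeasure m (setprod B S) / emeasure m B"
      using mB by (simp add: mult_divide_eq_ennreal)
    then have "of_nat (card F) < (of_nat N :: ennreal)"
      using N by (rule order.strict_trans1)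
    then show ?thesis
      by simp
  qed
  then show thesis
    by (rule that)
qed

lemma obtain_disjoint_rtrans_cover:
  fixes m :: "'g::{topological_group_add, t2_space} measure" and B S :: "'g set"
  assumes m: "unimodular_haar m" and B: "csu_nbhd B" and S: "compact S"
  obtains F where "finite F" "F \<subseteq> S" "disjoint_family_on (rtrans B) F"
    "S \<subseteq> (\<Union>x\<in>F. rtrans (setprod B B) x)"
proof -
  define P where "P F \<longleftrightarrow> finite F \<and> F \<subseteq> S \<and> disjoint_family_on (rtrans B) F" for F
  obtain N where N: "\<And>F. P F \<Longrightarrow> card F < N"
    using disjoint_rtrans_card_bounded[OF m B S] unfolding P_def by metis
  have "P {}"
    by (simp add: P_def disjoint_family_on_def)
  then obtain F where "P F" and maximal: "\<And>G. P G \<Longrightarrow> card G \<le> card F"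
    using ex_has_greatest_nat[of P "{}" card N] N by metis
  have "S \<subseteq> (\<Union>x\<in>F. rtrans (setprod B B) x)"
  proof
    fix y assume "y \<in> S"
    show "y \<in> (\<Union>x\<in>F. rtrans (setprod B B) x)"
    proof (rule ccontr)
      assume uncovered: "y \<notin> (\<Union>x\<in>F. rtrans (setprod B B) x)"
      have "y \<in> rtrans (setprod B B) y"
        using zero_in_csu_nbhd[OF B] unfolding rtrans_def setprod_def by force
      then have "y \<notin> F"
        using uncovered by blast
      have "rtrans B y \<inter> (\<Union>x\<in>F. rtrans B x) = {}"
        using rtrans_disjoint_if_not_in_rtrans_setprod[of B y] B uncovered
        by (auto simp: csu_nbhd_def)
      then have "P (insert y F)"
        using \<open>P F\<close> \<open>y \<in> S\<close> \<open>y \<notin> F\<close> by (simp add: P_def disjoint_family_on_insert)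
      then have "card (insert y F) \<le> card F"
        by (rule maximal)
      with \<open>y \<notin> F\<close> \<open>P F\<close> show False
        by (simp add: P_def)
    qed
  qed
  with \<open>P F\<close> show thesis
    using that unfolding P_def by blast
qed

section \<open>Comparison of \<open>\<nu>\<close> with Haar measure\<close>

lemma emeasure_le_scaled_haar_setprod:
  fixes m \<nu> :: "'g::{topological_group_add, t2_space} measure"
  assumes m: "unimodular_haar m" and B: "csu_nbhd B" and sets_\<nu>: "sets \<nu> = sets borel"
    and bound: "\<And>x. emeasure \<nu> (rtrans (setprod B B) x) \<le> c" and S: "compact S"
  shows "emeasure \<nu> S \<le> c / emeasure m B * emeasure m (setprod B S)"
proof -
  note haar = unimodular_haar_measure[OF m]
  obtain F where F: "finite F" "F \<subseteq> S" "disjoint_family_on (rtrans B) F"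
    "S \<subseteq> (\<Union>x\<in>F. rtrans (setprod B B) x)"
    using obtain_disjoint_rtrans_cover[OF m B S] .
  have "compact B"
    using B by (simp add: csu_nbhd_def)
  have "emeasure \<nu> S \<le> (\<Sum>x\<in>F. emeasure \<nu> (rtrans (setprod B B) x))"
    using F \<open>compact B\<close>
    by (intro emeasure_le_sum_cover) (auto simp: sets_\<nu> borel_compact compact_rtrans compact_setprod)
  also have "\<dots> \<le> of_nat (card F) * c"
    using sum_mono[of F _ "\<lambda>_. c"] bound by simp
  also have "\<dots> = c / emeasure m B * (of_nat (card F) * emeasure m B)"
    using emeasure_csu_nbhd_pos[OF haar B] emeasure_compact_less_top[OF haar \<open>compact B\<close>]
    by (simp add: ennreal_divide_mult_cancel)
  also have "\<dots> \<le> c / emeasure m B * emeasure m (setprod B S)"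
    using card_disjoint_rtrans_le[OF m \<open>compact B\<close> S F(1-3)] by (rule mult_left_mono) simp
  finally show ?thesis .
qed

lemma scaled_haar_le_emeasure_setprod:
  fixes m \<nu> :: "'g::{topological_group_add, t2_space} measure"
  assumes m: "unimodular_haar m" and B: "csu_nbhd B" and sets_\<nu>: "sets \<nu> = sets borel"
    and bound: "\<And>x. c \<le> emeasure \<nu> (rtrans B x)" and S: "compact S"
  shows "c / emeasure m (setprod B B) * emeasure m S \<le> emeasure \<nu> (setprod B S)"
proof -
  note haar = unimodular_haar_measure[OF m]
  obtain F where F: "finite F" "F \<subseteq> S" "disjoint_family_on (rtrans B) F"
    "S \<subseteq> (\<Union>x\<in>F. rtrans (setprod B B) x)"
    using obtain_disjoint_rtrans_cover[OF m B S] .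
  have "compact B" "compact (setprod B B)"
    using B by (simp_all add: csu_nbhd_def compact_setprod)
  have "0 < emeasure m (setprod B B)"
    using emeasure_csu_nbhd_pos[OF haar B] emeasure_le_setprod[OF haar zero_in_csu_nbhd[OF B]]
      \<open>compact B\<close> by (meson order.strict_trans2)
  then have mBB: "emeasure m (setprod B B) \<noteq> 0" "emeasure m (setprod B B) \<noteq> top"
    using emeasure_compact_less_top[OF haar \<open>compact (setprod B B)\<close>] by auto
  have "emeasure m S \<le> (\<Sum>x\<in>F. emeasure m (rtrans (setprod B B) x))"
    using F \<open>compact (setprod B B)\<close>
    by (intro emeasure_le_sum_cover) (auto simp: haar_measure_sets[OF haar] borel_compact compact_rtrans)
  also have "\<dots> = of_nat (card F) * emeasure m (setprod B B)"
    using emeasure_rtrans[OF m] borel_compact[OF \<open>compact (setprod B B)\<close>] by simp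
  finally have "c / emeasure m (setprod B B) * emeasure m S
      \<le> c / emeasure m (setprod B B) * (of_nat (card F) * emeasure m (setprod B B))"
    by (rule mult_left_mono) simp
  also have "\<dots> = (\<Sum>x\<in>F. c)"
    using mBB by (simp add: ennreal_divide_mult_cancel)
  also have "\<dots> \<le> (\<Sum>x\<in>F. emeasure \<nu> (rtrans B x))"
    using bound by (rule sum_mono)
  also have "\<dots> = emeasure \<nu> (\<Union>x\<in>F. rtrans B x)"
    using F \<open>compact B\<close> by (intro sum_emeasure) (auto simp: sets_\<nu> borel_compact compact_rtrans)
  also have "\<dots> \<le> emeasure \<nu> (setprod B S)"
    using F \<open>compact B\<close> S
    by (intro emeasure_mono UN_least rtrans_subset_setprod) (auto simp: sets_\<nu> borel_compact compact_setprod)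
  finally show ?thesis .
qed

section \<open>Comparison of \<open>L\<^sup>\<plusminus>\<close> with \<open>I(G)\<close>\<close>

definition growth_ratio :: "'g::topological_group_add measure \<Rightarrow> 'g set \<Rightarrow> ennreal" where
  "growth_ratio m K = (INF A \<in> cpt_pos_sets m. emeasure m (setprod K A) / emeasure m A)"

lemma I_G_eq_SUP_growth_ratio: "I_G m = (SUP K \<in> cpt_sets. growth_ratio m K)"
  unfolding I_G_def growth_ratio_def ..

lemma growth_ratio_le_I_G: "K \<in> cpt_sets \<Longrightarrow> growth_ratio m K \<le> I_G m"
  unfolding I_G_eq_SUP_growth_ratio by (rule SUP_upper)

lemma scaled_I_G_le_L_minus:
  fixes m \<nu> :: "'g::topological_group_add measure"
  assumes B: "B \<in> cpt_sets"
    and lower: "\<And>S. compact S \<Longrightarrow> \<alpha> * emeasure m S \<le> emeasure \<nu> (setprod B S)"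
  shows "\<alpha> * I_G m \<le> L_minus m \<nu>"
proof -
  have "\<alpha> * growth_ratio m K
      \<le> (INF A\<in>cpt_pos_sets m. emeasure \<nu> (setprod (setprod B K) A) / emeasure m A)"
    if K: "K \<in> cpt_sets" for K :: "'g set"
  proof (rule INF_greatest)
    fix A assume A: "A \<in> cpt_pos_sets m"
    have "\<alpha> * growth_ratio m K \<le> \<alpha> * emeasure m (setprod K A) / emeasure m A"
      unfolding growth_ratio_def ennreal_times_divide[symmetric]
      using A by (intro mult_left_mono INF_lower) auto
    also have "\<dots> \<le> emeasure \<nu> (setprod (setprod B K) A) / emeasure m A"
      unfolding setprod_assoc using K A
      by (intro divide_right_mono_ennreal lower compact_setprod cpt_setsD cpt_pos_setsD)
    finally show "\<alpha> * growth_ratio m K \<le> emeasure \<nu> (setprod (setprod B K) A) / emeasure m A" .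
  qed
  then have "(SUP K\<in>cpt_sets. \<alpha> * growth_ratio m K) \<le> L_minus m \<nu>"
    unfolding L_minus_def using setprod_in_cpt_sets[OF B] by (intro SUP_mono) blast
  then show ?thesis
    by (simp add: I_G_eq_SUP_growth_ratio SUP_mult_left_ennreal)
qed

lemma L_minus_le_scaled_I_G:
  fixes m \<nu> :: "'g::topological_group_add measure"
  assumes B: "B \<in> cpt_sets" and \<beta>: "\<beta> \<noteq> 0" "\<beta> \<noteq> top"
    and upper: "\<And>S. compact S \<Longrightarrow> emeasure \<nu> S \<le> \<beta> * emeasure m (setprod B S)"
  shows "L_minus m \<nu> \<le> \<beta> * I_G m"
  unfolding L_minus_def
proof (rule SUP_least)
  fix K :: "'g set" assume K: "K \<in> cpt_sets"
  have "emeasure \<nu> (setprod K A) / emeasure m A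
      \<le> \<beta> * (emeasure m (setprod (setprod B K) A) / emeasure m A)"
    if A: "A \<in> cpt_pos_sets m" for A
    unfolding ennreal_times_divide setprod_assoc using K A
    by (intro divide_right_mono_ennreal upper compact_setprod cpt_setsD cpt_pos_setsD)
  then have "(INF A\<in>cpt_pos_sets m. emeasure \<nu> (setprod K A) / emeasure m A)
      \<le> \<beta> * growth_ratio m (setprod B K)"
    unfolding growth_ratio_def INF_mult_left_ennreal[OF \<beta>] by (intro INF_superset_mono) auto
  also have "\<dots> \<le> \<beta> * I_G m"
    using setprod_in_cpt_sets[OF B K] by (intro mult_left_mono growth_ratio_le_I_G) auto
  finally show "(INF A\<in>cpt_pos_sets m. emeasure \<nu> (setprod K A) / emeasure m A) \<le> \<beta> * I_G m" .
qed

lemma scaled_inverse_I_G_le_L_plus: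
  fixes m \<nu> :: "'g::{topological_group_add, t2_space} measure"
  assumes m: "haar_measure m" and B: "B \<in> cpt_sets"
    and lower: "\<And>S. compact S \<Longrightarrow> \<alpha> * emeasure m S \<le> emeasure \<nu> (setprod B S)"
  shows "\<alpha> * inverse (I_G m) \<le> L_plus m \<nu>"
  unfolding L_plus_def
proof (rule INF_greatest)
  fix K :: "'g set" assume K: "K \<in> cpt_sets"
  have KB: "setprod K B \<in> cpt_sets"
    using setprod_in_cpt_sets[OF K B] .
  have "\<alpha> * inverse (I_G m) \<le> \<alpha> * inverse (growth_ratio m (setprod K B))"
    using KB by (intro mult_left_mono ennreal_inverse_antimono growth_ratio_le_I_G) auto
  also have "\<dots> = (SUP A\<in>cpt_pos_sets m. \<alpha> * (emeasure m A / emeasure m (setprod (setprod K B) A)))"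
    unfolding growth_ratio_def inverse_INF_ennreal SUP_mult_left_ennreal
  proof (intro SUP_cong refl arg_cong[where f="(*) \<alpha>"] inverse_divide_ennreal)
    fix A assume A: "A \<in> cpt_pos_sets m"
    show "emeasure m (setprod (setprod K B) A) < top"
      using KB A by (intro emeasure_compact_less_top[OF m] compact_setprod cpt_setsD cpt_pos_setsD)
    show "emeasure m A \<noteq> 0"
      using A by (rule cpt_pos_setsD)
  qed
  also have "\<dots> \<le> (SUP A\<in>cpt_pos_sets m. emeasure \<nu> A / emeasure m (setprod K A))"
  proof (rule SUP_mono)
    fix A assume A: "A \<in> cpt_pos_sets m"
    have "\<alpha> * (emeasure m A / emeasure m (setprod (setprod K B) A))
        \<le> emeasure \<nu> (setprod B A) / emeasure m (setprod K (setprod B A))"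
      unfolding ennreal_times_divide setprod_assoc
      using A by (intro divide_right_mono_ennreal lower cpt_pos_setsD)
    then show "\<exists>A'\<in>cpt_pos_sets m. \<alpha> * (emeasure m A / emeasure m (setprod (setprod K B) A))
        \<le> emeasure \<nu> A' / emeasure m (setprod K A')"
      using setprod_in_cpt_pos_sets[OF m B A] by blast
  qed
  finally show "\<alpha> * inverse (I_G m) \<le> (SUP A\<in>cpt_pos_sets m. emeasure \<nu> A / emeasure m (setprod K A))" .
qed

lemma L_plus_le_scaled_inverse_I_G:
  fixes m \<nu> :: "'g::{topological_group_add, t2_space} measure"
  assumes m: "haar_measure m" and B: "B \<in> cpt_sets" and \<beta>: "\<beta> \<noteq> 0" "\<beta> \<noteq> top"
    and upper: "\<And>S. compact S \<Longrightarrow> emeasure \<nu> S \<le> \<beta> * emeasure m (setprod B S)"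
  shows "L_plus m \<nu> \<le> \<beta> * inverse (I_G m)"
proof -
  have "L_plus m \<nu>
      \<le> (INF K\<in>cpt_sets. SUP A\<in>cpt_pos_sets m. emeasure \<nu> A / emeasure m (setprod (setprod K B) A))"
    unfolding L_plus_def using setprod_in_cpt_sets[OF _ B] by (intro INF_mono) blast
  also have "\<dots> \<le> (INF K\<in>cpt_sets. \<beta> * inverse (growth_ratio m K))"
  proof (rule INF_superset_mono[OF order_refl], rule SUP_least)
    fix K A :: "'g set" assume K: "K \<in> cpt_sets" and A: "A \<in> cpt_pos_sets m"
    have BA: "setprod B A \<in> cpt_pos_sets m"
      using setprod_in_cpt_pos_sets[OF m B A] .
    have "emeasure m (setprod K (setprod B A)) < top"
      using K BA by (intro emeasure_compact_less_top[OF m] compact_setprod cpt_setsD cpt_pos_setsD)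
    moreover have "emeasure m (setprod B A) \<noteq> 0"
      using BA by (rule cpt_pos_setsD)
    ultimately have ratio_inverse: "emeasure m (setprod B A) / emeasure m (setprod K (setprod B A))
        = inverse (emeasure m (setprod K (setprod B A)) / emeasure m (setprod B A))"
      by (simp add: inverse_divide_ennreal)
    have "emeasure \<nu> A / emeasure m (setprod (setprod K B) A)
        \<le> \<beta> * (emeasure m (setprod B A) / emeasure m (setprod K (setprod B A)))"
      unfolding ennreal_times_divide setprod_assoc
      using A by (intro divide_right_mono_ennreal upper cpt_pos_setsD)
    also have "\<dots> = \<beta> * inverse (emeasure m (setprod K (setprod B A)) / emeasure m (setprod B A))"
      by (simp only: ratio_inverse)
    also have "\<dots> \<le> \<beta> * inverse (growth_ratio m K)"
      unfolding growth_ratio_def using BA by (intro mult_left_mono ennreal_inverse_antimono INF_lower) auto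
    finally show "emeasure \<nu> A / emeasure m (setprod (setprod K B) A) \<le> \<beta> * inverse (growth_ratio m K)" .
  qed
  also have "\<dots> = \<beta> * inverse (I_G m)"
    by (simp add: I_G_eq_SUP_growth_ratio inverse_SUP_ennreal INF_mult_left_ennreal[OF \<beta>])
  finally show ?thesis .
qed

theorem lemma3p7:
  fixes m \<nu> :: "'g::{topological_group_add, t2_space} measure"
    and Bl Bu :: "'g set" and Cl Cu :: real
  assumes "locally_compact_space (euclidean :: 'g topology)"
    and "unimodular_haar m"
    and "delone_measure \<nu>"
    and "csu_nbhd Bl" and "csu_nbhd Bu"
    and "0 < Cl" and "0 < Cu"
    and "\<And>x. ennreal Cl \<le> emeasure \<nu> (rtrans Bl x)"
    and "\<And>x. emeasure \<nu> (rtrans (setprod Bu Bu) x) \<le> ennreal Cu"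
  shows "ennreal Cl / emeasure m (setprod Bl Bl) * I_G m \<le> L_minus m \<nu> \<and>
           L_minus m \<nu> \<le> ennreal Cu / emeasure m Bu * I_G m \<and>
           ennreal Cl / emeasure m (setprod Bl Bl) * inverse (I_G m) \<le> L_plus m \<nu> \<and>
           L_plus m \<nu> \<le> ennreal Cu / emeasure m Bu * inverse (I_G m)"
proof -
  have haar: "haar_measure m"
    using assms(2) by (rule unimodular_haar_measure)
  have sets_\<nu>: "sets \<nu> = sets borel"
    using assms(3) by (simp add: delone_measure_def borel_measure_on_def)
  have Bl: "Bl \<in> cpt_sets" and Bu: "Bu \<in> cpt_sets"
    using assms(4,5) by (simp_all add: csu_nbhd_in_cpt_sets)
  note lower = scaled_haar_le_emeasure_setprod[OF assms(2,4) sets_\<nu> assms(8)]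
  note upper = emeasure_le_scaled_haar_setprod[OF assms(2,5) sets_\<nu> assms(9)]
  have \<beta>: "ennreal Cu / emeasure m Bu \<noteq> 0" "ennreal Cu / emeasure m Bu \<noteq> top"
    using assms(5,7) emeasure_csu_nbhd_pos[OF haar assms(5)] emeasure_compact_less_top[OF haar, of Bu]
    by (auto simp: ennreal_divide_eq_top_iff csu_nbhd_def)
  show ?thesis
    using scaled_I_G_le_L_minus[OF Bl lower] L_minus_le_scaled_I_G[OF Bu \<beta> upper]
      scaled_inverse_I_G_le_L_plus[OF haar Bl lower] L_plus_le_scaled_inverse_I_G[OF haar Bu \<beta> upper]
    by blast
qed

end
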